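(* Let $n\ge2$ and let $r:(0,1]\to[0,\infty)$ be continuous with $r(1)=0$, $\lim_{t\to0^+}r(t)=\infty$ and $r(t)>0$ for all $t\in(0,1)$. Then the map $F:\mathcal K_0^n\times[0,1]\to\mathcal K_0^n$ defined by $F(K,0)=K$ and $F(K,t)=K\cap r(t)\mathbb B$ for $t\in(0,1]$ is continuous (with $\mathcal K_0^n$ carrying the metric $d_{AW}$).
   Context: $\mathbb R^n$ carries the Euclidean norm $\|\cdot\|$ with closed unit ball $\mathbb B$; $d(x,A)=\inf_{a\in A}\|x-a\|$. $\mathcal K^n$ is the family of nonempty closed convex subsets of $\mathbb R^n$, $\mathcal K_0^n$ those containing $0$. The Attouch–Wets metric is $d_{AW}(A,K)=\sup_{j\in\mathbb N}\min\{\frac1j,\sup_{\|x\|<j}|d(x,A)-d(x,K)|\}$. *)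

theory Defs
  imports "HOL-Analysis.Analysis"
begin

definition K0 :: "'a::euclidean_space set set" where
  "K0 = {K. K \<noteq> {} \<and> closed K \<and> convex K \<and> 0 \<in> K}"

definition dAW :: "'a::euclidean_space set \<Rightarrow> 'a set \<Rightarrow> real" where
  "dAW A K = (SUP j\<in>{1::nat..}. min (1 / real j)
       (SUP x\<in>{x. norm x < real j}. \<bar>infdist x A - infdist x K\<bar>))"

definition Ftrunc :: "(real \<Rightarrow> real) \<Rightarrow> 'a::euclidean_space set \<Rightarrow> real \<Rightarrow> 'a set" where
  "Ftrunc r K t = (if t = 0 then K else K \<inter> cball 0 (r t))"

end

(* Truncation does not move distance functions near the origin: for K containing 0, a nearest
   point of K to x lies in 2 norm(x) B, so d(x, K \<inter> R B) = d(x, K) once R \<ge> 2 norm(x). As t \<rightarrow> 0 the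
   radius r(t) blows up, so F(K', t) agrees with K' in every fixed window and only the tail
   term 1/j of d_AW is affected. For t > 0 the map is Lipschitz-like: if d(., K) and d(., K')
   differ by at most \<delta> on R B, then pushing a nearest point radially into r(t') B (possible by
   convexity and 0 \<in> K') shows that the truncations differ by at most 2\<delta> + |r(t) - r(t')|. *)

theory Submission
  imports Defs
begin

lemma bdd_above_infdist_diff:
  "bdd_above ((\<lambda>x. \<bar>infdist x A - infdist x B\<bar>) ` {x. norm x < c})"
proof (rule bdd_aboveI2)
  fix x :: 'a assume "x \<in> {x. norm x < c}"
  then have "norm x < c" by simp
  moreover have "infdist x A \<le> infdist 0 A + norm x" "infdist x B \<le> infdist 0 B + norm x"
    using infdist_triangle[of x _ 0] by (simp_all add: dist_norm)
  ultimately show "\<bar>infdist x A - infdist x B\<bar> \<le> infdist 0 A + infdist 0 B + c"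
    using infdist_nonneg[of x A] infdist_nonneg[of x B] infdist_nonneg[of 0 A] infdist_nonneg[of 0 B]
    by linarith
qed

lemma dAW_upper:
  assumes "j \<ge> 1" "norm x < real j"
  shows "min (1 / real j) \<bar>infdist x A - infdist x B\<bar> \<le> dAW A B"
proof -
  define s where "s i = (SUP x\<in>{x. norm x < real i}. \<bar>infdist x A - infdist x B\<bar>)" for i
  have "bdd_above ((\<lambda>i. min (1 / real i) (s i)) ` {1::nat..})"
    by (rule bdd_aboveI2[where M = 1]) (auto simp: min_le_iff_disj)
  then have "min (1 / real j) (s j) \<le> dAW A B"
    unfolding dAW_def s_def[symmetric] using assms by (intro cSUP_upper) auto
  moreover have "\<bar>infdist x A - infdist x B\<bar> \<le> s j"
    unfolding s_def using assms by (intro cSUP_upper bdd_above_infdist_diff) auto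
  ultimately show ?thesis by linarith
qed

lemma dAW_least:
  assumes "\<And>j x. j \<ge> 1 \<Longrightarrow> norm x < real j \<Longrightarrow>
             min (1 / real j) \<bar>infdist x A - infdist x B\<bar> \<le> e"
  shows "dAW A B \<le> e"
  unfolding dAW_def
proof (rule cSUP_least)
  fix j :: nat assume "j \<in> {1..}"
  then have j: "j \<ge> 1" by simp
  show "min (1 / real j) (SUP x\<in>{x. norm x < real j}. \<bar>infdist x A - infdist x B\<bar>) \<le> e"
  proof (cases "1 / real j \<le> e")
    case False
    then have "\<bar>infdist x A - infdist x B\<bar> \<le> e" if "norm x < real j" for x
      using assms[OF j that] by linarith
    then have "(SUP x\<in>{x. norm x < real j}. \<bar>infdist x A - infdist x B\<bar>) \<le> e"
      using j by (intro cSUP_least) (auto intro!: exI[of _ 0])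
    then show ?thesis by linarith
  qed linarith
qed simp

lemma Int_cball_in_K0: "A \<in> K0 \<Longrightarrow> R \<ge> 0 \<Longrightarrow> A \<inter> cball 0 R \<in> K0"
  by (auto simp: K0_def intro: closed_Int convex_Int)

lemma infdist_Int_cball_eq:
  fixes A :: "'a::euclidean_space set"
  assumes "closed A" "0 \<in> A" "2 * norm x \<le> R"
  shows "infdist x (A \<inter> cball 0 R) = infdist x A"
proof -
  obtain p where p: "p \<in> A" "infdist x A = dist x p"
    using infdist_attains_inf[of A x] assms by blast
  have "dist x p \<le> norm x" using infdist_le[OF assms(2), of x] p by simp
  moreover have "norm p \<le> norm x + dist x p"
    using norm_triangle_ineq[of x "p - x"] by (simp add: dist_norm norm_minus_commute)
  ultimately have pin: "p \<in> A \<inter> cball 0 R" using p assms(3) by auto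
  show ?thesis
    using infdist_le[OF pin, of x] infdist_mono[of "A \<inter> cball 0 R" A x] pin p by force
qed

lemma convex_Int_cball_near:
  fixes B :: "'a::real_normed_vector set"
  assumes "convex B" "0 \<in> B" "p \<in> B" "R \<ge> 0"
  obtains q where "q \<in> B \<inter> cball 0 R" "dist p q \<le> max 0 (norm p - R)"
proof (cases "norm p \<le> R")
  case True
  then show ?thesis using that[of p] assms by auto
next
  case False
  define l where "l = R / norm p"
  have np: "norm p > 0" using False assms(4) by linarith
  have l: "0 \<le> l" "l \<le> 1" using False assms(4) np by (auto simp: l_def field_simps)
  have "(1 - l) *\<^sub>R 0 + l *\<^sub>R p \<in> B"
    by (rule convexD[OF assms(1-3)]) (use l in auto)
  moreover have "norm (l *\<^sub>R p) = R" using np assms(4) by (simp add: l_def)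
  moreover have "dist p (l *\<^sub>R p) = norm p - R"
  proof -
    have "p - l *\<^sub>R p = (1 - l) *\<^sub>R p" by (simp add: algebra_simps)
    then have "dist p (l *\<^sub>R p) = (1 - l) * norm p"
      using l by (simp add: dist_norm)
    also have "\<dots> = norm p - R" using np by (simp add: l_def field_simps)
    finally show ?thesis .
  qed
  ultimately show ?thesis using that[of "l *\<^sub>R p"] by auto
qed

lemma infdist_Int_cball_le:
  fixes A B :: "'a::euclidean_space set"
  assumes A: "closed A" "0 \<in> A" "R \<ge> 0"
    and B: "closed B" "convex B" "0 \<in> B" "R' \<ge> 0"
    and close: "\<And>p. p \<in> A \<Longrightarrow> norm p \<le> R \<Longrightarrow> infdist p B \<le> \<delta>"
  shows "infdist x (B \<inter> cball 0 R') \<le> infdist x (A \<inter> cball 0 R) + (2 * \<delta> + \<bar>R - R'\<bar>)"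
proof -
  obtain p where p: "p \<in> A \<inter> cball 0 R" "infdist x (A \<inter> cball 0 R) = dist x p"
  proof (rule infdist_attains_inf)
    show "closed (A \<inter> cball 0 R)" "A \<inter> cball 0 R \<noteq> {}" using A by auto
  qed
  obtain p' where p': "p' \<in> B" "infdist p B = dist p p'"
    using infdist_attains_inf[of B p] B by blast
  have pp': "dist p p' \<le> \<delta>" using close[of p] p p' by auto
  have "norm p' \<le> norm p + dist p p'"
    using norm_triangle_ineq[of p "p' - p"] by (simp add: dist_norm norm_minus_commute)
  then have "norm p' \<le> R + \<delta>" using p pp' by auto
  obtain q where q: "q \<in> B \<inter> cball 0 R'" "dist p' q \<le> max 0 (norm p' - R')"
    using convex_Int_cball_near[OF B(2,3) p'(1) B(4)] .
  have "infdist x (B \<inter> cball 0 R') \<le> dist x q"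
    using q by (auto intro: infdist_le)
  also have "\<dots> \<le> dist x p + dist p p' + dist p' q"
    using dist_triangle[of x q p] dist_triangle[of p q p'] by linarith
  finally show ?thesis
    using p pp' q \<open>norm p' \<le> R + \<delta>\<close> zero_le_dist[of p p'] by linarith
qed

lemma dAW_Int_cball_le:
  fixes A B :: "'a::euclidean_space set"
  assumes A: "A \<in> K0" "R \<ge> 0" and B: "B \<in> K0" "R' \<ge> 0"
    and j: "j \<ge> 1" "max R R' < real j" and AB: "dAW A B < 1 / real j"
  shows "dAW (A \<inter> cball 0 R) (B \<inter> cball 0 R') \<le> 2 * dAW A B + \<bar>R - R'\<bar>"
proof (rule dAW_least)
  have close: "\<bar>infdist p A - infdist p B\<bar> \<le> dAW A B" if "norm p \<le> max R R'" for p
    using dAW_upper[OF j(1), of p A B] j(2) that AB by linarith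
  have AB_close: "infdist p B \<le> dAW A B" if "p \<in> A" "norm p \<le> R" for p
    using close[of p] that by (simp add: abs_le_iff)
  have BA_close: "infdist p A \<le> dAW A B" if "p \<in> B" "norm p \<le> R'" for p
    using close[of p] that by (simp add: abs_le_iff)
  have "closed A" "convex A" "0 \<in> A" "closed B" "convex B" "0 \<in> B"
    using A B by (auto simp: K0_def)
  then have "infdist x (B \<inter> cball 0 R') \<le> infdist x (A \<inter> cball 0 R) + (2 * dAW A B + \<bar>R - R'\<bar>)"
    and "infdist x (A \<inter> cball 0 R) \<le> infdist x (B \<inter> cball 0 R') + (2 * dAW A B + \<bar>R' - R\<bar>)"
    for x
    using A(2) B(2) AB_close BA_close by (blast intro: infdist_Int_cball_le)+
  then have "\<bar>infdist x (A \<inter> cball 0 R) - infdist x (B \<inter> cball 0 R')\<bar> \<le> 2 * dAW A B + \<bar>R - R'\<bar>"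
    for x
    using abs_minus_commute[of R R'] by (smt (verit))
  then show "min (1 / real i) \<bar>infdist x (A \<inter> cball 0 R) - infdist x (B \<inter> cball 0 R')\<bar>
      \<le> 2 * dAW A B + \<bar>R - R'\<bar>" for i x
    by (simp add: min_le_iff_disj)
qed

lemma dAW_Int_cball_far:
  fixes A B :: "'a::euclidean_space set"
  assumes B: "closed B" "0 \<in> B" and c: "c > 0" "2 * c \<le> R"
  shows "dAW A (B \<inter> cball 0 R) \<le> max (dAW A B) (1 / c)"
proof (rule dAW_least)
  fix j :: nat and x :: 'a assume j: "j \<ge> 1" "norm x < real j"
  show "min (1 / real j) \<bar>infdist x A - infdist x (B \<inter> cball 0 R)\<bar> \<le> max (dAW A B) (1 / c)"
  proof (cases "2 * norm x \<le> R")
    case True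
    then show ?thesis using infdist_Int_cball_eq[OF B True] dAW_upper[OF j, of A B] by simp
  next
    case False
    then have "c < real j" using c j(2) by linarith
    then have "1 / real j \<le> 1 / c" using c by (simp add: frac_le)
    then show ?thesis by linarith
  qed
qed

lemma Ftrunc_in_K0:
  assumes "\<forall>t\<in>{0<..1}. r t \<ge> 0" "K \<in> K0" "t \<in> {0..1}"
  shows "Ftrunc r K t \<in> K0"
  using assms Int_cball_in_K0[of K "r t"] by (auto simp: Ftrunc_def)

lemma Ftrunc_continuous_at_0:
  fixes K :: "'a::euclidean_space set"
  assumes lim: "filterlim r at_top (at_right 0)" and e: "\<epsilon> > 0"
  shows "\<exists>\<delta>>0. \<forall>K'\<in>K0. \<forall>t'\<ge>0. dAW K K' < \<delta> \<and> t' < \<delta> \<longrightarrow> dAW K (Ftrunc r K' t') < \<epsilon>"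
proof -
  define c where "c = 2 / \<epsilon>"
  have c: "c > 0" "1 / c < \<epsilon>" using e by (simp_all add: c_def)
  have "eventually (\<lambda>s. 2 * c \<le> r s) (at_right 0)"
    using lim by (simp add: filterlim_at_top)
  then obtain b where b: "b > 0" "\<And>s. 0 < s \<Longrightarrow> s < b \<Longrightarrow> 2 * c \<le> r s"
    by (auto simp: eventually_at_right_field)
  show ?thesis
  proof (intro exI[of _ "min \<epsilon> b"] conjI ballI allI impI)
    fix K' :: "'a set" and t' :: real
    assume K': "K' \<in> K0" and "t' \<ge> 0" and h: "dAW K K' < min \<epsilon> b \<and> t' < min \<epsilon> b"
    show "dAW K (Ftrunc r K' t') < \<epsilon>"
    proof (cases "t' = 0")
      case False
      then have "2 * c \<le> r t'" using b \<open>t' \<ge> 0\<close> h by auto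
      then have "dAW K (K' \<inter> cball 0 (r t')) \<le> max (dAW K K') (1 / c)"
        using K' c by (intro dAW_Int_cball_far) (auto simp: K0_def)
      then show ?thesis using False h c by (simp add: Ftrunc_def max_def split: if_splits)
    qed (use h in \<open>simp add: Ftrunc_def\<close>)
  qed (use e b in auto)
qed

lemma Ftrunc_continuous_at_pos:
  fixes K :: "'a::euclidean_space set"
  assumes cont: "continuous_on {0<..1} r" and nonneg: "\<forall>t\<in>{0<..1}. r t \<ge> 0"
    and K: "K \<in> K0" and t: "t \<in> {0<..1}" and e: "\<epsilon> > 0"
  shows "\<exists>\<delta>>0. \<forall>K'\<in>K0. \<forall>t'\<in>{0..1}. dAW K K' < \<delta> \<and> \<bar>t - t'\<bar> < \<delta> \<longrightarrow>
           dAW (Ftrunc r K t) (Ftrunc r K' t') < \<epsilon>"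
proof -
  obtain \<eta> where \<eta>: "\<eta> > 0" "\<And>t'. t' \<in> {0<..1} \<Longrightarrow> dist t' t < \<eta> \<Longrightarrow> dist (r t') (r t) < \<epsilon> / 2"
    using cont t e unfolding continuous_on_iff by (metis half_gt_zero)
  define J :: nat where "J = nat \<lceil>r t + \<epsilon>\<rceil> + 1"
  have J: "J \<ge> 1" "r t + \<epsilon> / 2 < real J" unfolding J_def using e by (auto, linarith)
  define \<delta> where "\<delta> = min (min (\<epsilon> / 4) (1 / real J)) (min \<eta> t)"
  show ?thesis
  proof (intro exI[of _ \<delta>] conjI ballI impI)
    show "\<delta> > 0" using e \<eta> J t by (auto simp: \<delta>_def)
    fix K' :: "'a set" and t' :: real
    assume K': "K' \<in> K0" and t': "t' \<in> {0..1}" and h: "dAW K K' < \<delta> \<and> \<bar>t - t'\<bar> < \<delta>"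
    have "t' > 0" using h t' by (auto simp: \<delta>_def)
    then have RR': "\<bar>r t - r t'\<bar> < \<epsilon> / 2"
      using \<eta>(2)[of t'] t' h by (auto simp: \<delta>_def dist_real_def abs_minus_commute)
    have "dAW (K \<inter> cball 0 (r t)) (K' \<inter> cball 0 (r t')) \<le> 2 * dAW K K' + \<bar>r t - r t'\<bar>"
    proof (rule dAW_Int_cball_le[OF K _ K' _ J(1)])
      show "max (r t) (r t') < real J" using RR' J by linarith
      show "dAW K K' < 1 / real J" using h by (simp add: \<delta>_def)
    qed (use nonneg t t' \<open>t' > 0\<close> in auto)
    moreover have "2 * dAW K K' \<le> \<epsilon> / 2" using h by (simp add: \<delta>_def)
    ultimately show "dAW (Ftrunc r K t) (Ftrunc r K' t') < \<epsilon>"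
      using RR' t \<open>t' > 0\<close> by (simp add: Ftrunc_def)
  qed
qed

theorem lemma3p1:
  fixes r :: "real \<Rightarrow> real"
  assumes dim: "DIM('a::euclidean_space) \<ge> 2"
    and cont: "continuous_on {0<..1} r"
    and nonneg: "\<forall>t\<in>{0<..1}. r t \<ge> 0"
    and r1: "r 1 = 0"
    and lim: "filterlim r at_top (at_right 0)"
    and pos: "\<forall>t\<in>{0<..<1}. r t > 0"
  shows "(\<forall>K\<in>(K0::'a set set). \<forall>t\<in>{0..1}. Ftrunc r K t \<in> K0)
    \<and> (\<forall>K\<in>(K0::'a set set). \<forall>t\<in>{0..1::real}. \<forall>\<epsilon>>0. \<exists>\<delta>>0.
         \<forall>K'\<in>K0. \<forall>t'\<in>{0..1}. dAW K K' < \<delta> \<and> \<bar>t - t'\<bar> < \<delta> \<longrightarrow>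
           dAW (Ftrunc r K t) (Ftrunc r K' t') < \<epsilon>)"
proof (intro conjI ballI allI impI)
  show "Ftrunc r K t \<in> K0" if "K \<in> K0" "t \<in> {0..1}" for K :: "'a set" and t
    using Ftrunc_in_K0[OF nonneg that] .
next
  fix K :: "'a set" and t \<epsilon> :: real
  assume K: "K \<in> K0" and t: "t \<in> {0..1}" and e: "\<epsilon> > 0"
  show "\<exists>\<delta>>0. \<forall>K'\<in>K0. \<forall>t'\<in>{0..1}. dAW K K' < \<delta> \<and> \<bar>t - t'\<bar> < \<delta> \<longrightarrow>
          dAW (Ftrunc r K t) (Ftrunc r K' t') < \<epsilon>"
  proof (cases "t = 0")
    case True
    then have FK: "Ftrunc r K t = K" by (simp add: Ftrunc_def)
    obtain \<delta> where "\<delta> > 0" and \<delta>: "\<forall>K'\<in>K0. \<forall>t'\<ge>0. dAW K K' < \<delta> \<and> t' < \<delta> \<longrightarrow> dAW K (Ftrunc r K' t') < \<epsilon>"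
      using Ftrunc_continuous_at_0[OF lim e] by blast
    show ?thesis
    proof (intro exI[of _ \<delta>] conjI \<open>\<delta> > 0\<close> ballI impI)
      fix K' t' assume "K' \<in> K0" "t' \<in> {0..1::real}" "dAW K K' < \<delta> \<and> \<bar>t - t'\<bar> < \<delta>"
      then show "dAW (Ftrunc r K t) (Ftrunc r K' t') < \<epsilon>" using \<delta> FK True by auto
    qed
  next
    case False
    then show ?thesis using Ftrunc_continuous_at_pos[OF cont nonneg K _ e] t by simp
  qed
qed

end
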